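(* Let $S=[S_1,\ldots,S_m]$ be a sequence of formulas and $I,J$ models. Then $I \equiv_{\emptyset S} J$ holds if and only if $I \equiv_{\emptyset Q} J$ holds for every formula $Q=(B_1\equiv S_1)\wedge\cdots\wedge(B_m\equiv S_m)$ with each $B_i\in\{\mathsf{true},\mathsf{false}\}$.
   Context: Propositional models are truth assignments over a finite set of variables; a formula used where a set of models is expected stands for its set of models. A doxastic state is a sequence $C=[C(0),\ldots,C(m)]$ of nonempty, pairwise disjoint sets of models covering all models; $I\le_C J$ iff $I\in C(i)$, $J\in C(j)$ with $i\le j$; $I\equiv_C J$ iff $I\le_C J$ and $J\le_C I$. The flat doxastic state $\emptyset$ is $[\text{all models}]$. Lexicographic revision: $C\,\mathrm{lex}(A) = [C(0)\cap A,\ldots,C(m)\cap A, C(0)\setminus A,\ldots,C(m)\setminus A]$, empty sets discarded. For a sequence of formulas $S=[S_1,\ldots,S_m]$, $\emptyset S$ denotes $\emptyset$ revised lexicographically by $S_1$, then $S_2$, ..., then $S_m$ ($\emptyset[\,]=\emptyset$); for a formula $Q$, $\emptyset Q$ denotes $\emptyset[Q]$. *)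

theory Defs
  imports Main
begin

datatype 'v form = TrueF | FalseF | Var 'v | Neg "'v form"
  | Conj "'v form" "'v form" | Disj "'v form" "'v form" | Iff "'v form" "'v form"

type_synonym 'v model = "'v \<Rightarrow> bool"

fun sat :: "'v model \<Rightarrow> 'v form \<Rightarrow> bool" where
  "sat I TrueF = True"
| "sat I FalseF = False"
| "sat I (Var x) = I x"
| "sat I (Neg f) = (\<not> sat I f)"
| "sat I (Conj f g) = (sat I f \<and> sat I g)"
| "sat I (Disj f g) = (sat I f \<or> sat I g)"
| "sat I (Iff f g) = (sat I f \<longleftrightarrow> sat I g)"

definition mods :: "'v form \<Rightarrow> 'v model set" where
  "mods f = {I. sat I f}"

type_synonym 'v doxstate = "'v model set list"

definition flat :: "'v doxstate" where
  "flat = [UNIV]"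

definition lex :: "'v doxstate \<Rightarrow> 'v form \<Rightarrow> 'v doxstate" where
  "lex C A = filter (\<lambda>X. X \<noteq> {})
     (map (\<lambda>X. X \<inter> mods A) C @ map (\<lambda>X. X - mods A) C)"

definition emptyrev :: "'v form list \<Rightarrow> 'v doxstate" where
  "emptyrev S = foldl lex flat S"

definition le_ds :: "'v doxstate \<Rightarrow> 'v model \<Rightarrow> 'v model \<Rightarrow> bool" where
  "le_ds C I J \<longleftrightarrow> (\<exists>i j. i < length C \<and> j < length C \<and> I \<in> C ! i \<and> J \<in> C ! j \<and> i \<le> j)"

definition eq_ds :: "'v doxstate \<Rightarrow> 'v model \<Rightarrow> 'v model \<Rightarrow> bool" where
  "eq_ds C I J \<longleftrightarrow> le_ds C I J \<and> le_ds C J I"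

definition boolF :: "bool \<Rightarrow> 'v form" where
  "boolF b = (if b then TrueF else FalseF)"

fun conjIff :: "bool list \<Rightarrow> 'v form list \<Rightarrow> 'v form" where
  "conjIff [] [] = TrueF"
| "conjIff [b] [s] = Iff (boolF b) s"
| "conjIff (b # bs) (s # ss) = Conj (Iff (boolF b) s) (conjIff bs ss)"
| "conjIff _ _ = TrueF"

end

theory Submission
  imports Defs
begin

text \<open>Lexicographic revision by a formula splits every class into its models and its countermodels
  of that formula and never merges classes. Hence the classes of the revision of the flat state by
  \<open>S\<^sub>1, \<dots>, S\<^sub>m\<close> are the nonempty sets of models sharing the same truth values on all of
  \<open>S\<^sub>1, \<dots>, S\<^sub>m\<close>, and \<open>I \<equiv> J\<close> there means that \<open>I\<close> and \<open>J\<close> agree on every \<open>S\<^sub>i\<close>.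
  For a single formula \<open>Q\<close> this says that \<open>I\<close> and \<open>J\<close> agree on \<open>Q\<close>. The conjunction
  \<open>(B\<^sub>1 \<equiv> S\<^sub>1) \<and> \<dots> \<and> (B\<^sub>m \<equiv> S\<^sub>m)\<close> holds in a model exactly when the \<open>B\<^sub>i\<close> are its truth values on
  the \<open>S\<^sub>i\<close>, so agreeing on all these conjunctions is again agreeing on every \<open>S\<^sub>i\<close>.\<close>

definition disjoint_class_list :: "'a set list \<Rightarrow> bool" where
  "disjoint_class_list C \<longleftrightarrow> distinct C \<and> pairwise disjnt (set C) \<and> {} \<notin> set C"

definition same_class :: "'a set list \<Rightarrow> 'a \<Rightarrow> 'a \<Rightarrow> bool" where
  "same_class C I J \<longleftrightarrow> (\<exists>X\<in>set C. I \<in> X \<and> J \<in> X)"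

lemma disjoint_class_list_index_unique:
  assumes "disjoint_class_list C" "i < length C" "j < length C" "K \<in> C ! i" "K \<in> C ! j"
  shows "i = j"
proof -
  have "C ! i = C ! j"
    using assms nth_mem unfolding disjoint_class_list_def pairwise_def disjnt_def by blast
  then show ?thesis
    using assms nth_eq_iff_index_eq unfolding disjoint_class_list_def by blast
qed

lemma eq_ds_iff_same_class:
  assumes "disjoint_class_list C"
  shows "eq_ds C I J \<longleftrightarrow> same_class C I J"
proof
  assume "eq_ds C I J"
  then obtain i j i' j' where
    I: "i < length C" "I \<in> C ! i" "i' < length C" "I \<in> C ! i'" and
    J: "j < length C" "J \<in> C ! j" "j' < length C" "J \<in> C ! j'" and "i \<le> j" "j' \<le> i'"
    unfolding eq_ds_def le_ds_def by blast
  moreover have "i = i'" "j = j'"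
    using disjoint_class_list_index_unique[OF assms] I J by blast+
  ultimately have "i = j" by simp
  with I J show "same_class C I J"
    unfolding same_class_def by (metis nth_mem)
next
  assume "same_class C I J"
  then obtain i where "i < length C" "I \<in> C ! i" "J \<in> C ! i"
    unfolding same_class_def by (metis in_set_conv_nth)
  then show "eq_ds C I J"
    unfolding eq_ds_def le_ds_def by blast
qed

lemma in_mods [simp]: "I \<in> mods A \<longleftrightarrow> sat I A"
  by (simp add: mods_def)

lemma in_set_lex:
  "Y \<in> set (lex C A) \<longleftrightarrow> Y \<noteq> {} \<and> (\<exists>X\<in>set C. Y = X \<inter> mods A \<or> Y = X - mods A)"
  by (auto simp: lex_def)

lemma same_class_lex:
  "same_class (lex C A) I J \<longleftrightarrow> same_class C I J \<and> (sat I A \<longleftrightarrow> sat J A)"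
proof
  assume "same_class (lex C A) I J"
  then obtain Y where "Y \<in> set (lex C A)" "I \<in> Y" "J \<in> Y"
    unfolding same_class_def by blast
  moreover from this(1) obtain X where "X \<in> set C" "Y = X \<inter> mods A \<or> Y = X - mods A"
    unfolding in_set_lex by blast
  ultimately show "same_class C I J \<and> (sat I A \<longleftrightarrow> sat J A)"
    unfolding same_class_def by auto
next
  assume "same_class C I J \<and> (sat I A \<longleftrightarrow> sat J A)"
  then obtain X where X: "X \<in> set C" "I \<in> X" "J \<in> X" and agree: "sat I A \<longleftrightarrow> sat J A"
    unfolding same_class_def by blast
  define Y where "Y = (if sat I A then X \<inter> mods A else X - mods A)"
  have Y: "I \<in> Y" "J \<in> Y"
    using X agree by (simp_all add: Y_def)
  have "\<exists>X'\<in>set C. Y = X' \<inter> mods A \<or> Y = X' - mods A"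
    using X(1) unfolding Y_def by auto
  with Y have "Y \<in> set (lex C A)"
    unfolding in_set_lex by auto
  with Y show "same_class (lex C A) I J"
    unfolding same_class_def by blast
qed

lemma distinct_filter_nonempty_map:
  assumes "distinct C" "pairwise disjnt (set C)"
  shows "distinct (filter (\<lambda>X. X \<noteq> {}) (map (\<lambda>X. X \<inter> M) C))"
    and "distinct (filter (\<lambda>X. X \<noteq> {}) (map (\<lambda>X. X - M) C))"
proof -
  have "inj_on (\<lambda>X. X \<inter> M) (set (filter (\<lambda>X. X \<inter> M \<noteq> {}) C))"
    "inj_on (\<lambda>X. X - M) (set (filter (\<lambda>X. X - M \<noteq> {}) C))"
    using assms(2) unfolding inj_on_def pairwise_def disjnt_def by auto
  then show "distinct (filter (\<lambda>X. X \<noteq> {}) (map (\<lambda>X. X \<inter> M) C))"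
    and "distinct (filter (\<lambda>X. X \<noteq> {}) (map (\<lambda>X. X - M) C))"
    using assms(1) by (simp_all add: filter_map comp_def distinct_map)
qed

lemma disjoint_class_list_lex:
  assumes "disjoint_class_list C"
  shows "disjoint_class_list (lex C A)"
proof -
  have C: "distinct C" "pairwise disjnt (set C)"
    using assms unfolding disjoint_class_list_def by blast+
  have "distinct (lex C A)"
    using distinct_filter_nonempty_map[OF C, of "mods A"]
    unfolding lex_def filter_append distinct_append by auto
  moreover have "Y = Y'"
    if Y: "Y \<in> set (lex C A)" "I \<in> Y" and Y': "Y' \<in> set (lex C A)" "I \<in> Y'" for Y Y' I
  proof -
    obtain X where X: "X \<in> set C" "Y = X \<inter> mods A \<or> Y = X - mods A"
      using Y(1) unfolding in_set_lex by blast
    obtain X' where X': "X' \<in> set C" "Y' = X' \<inter> mods A \<or> Y' = X' - mods A"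
      using Y'(1) unfolding in_set_lex by blast
    have "I \<in> X" "I \<in> X'"
      using X X' Y(2) Y'(2) by auto
    with X(1) X'(1) C(2) have "X = X'"
      unfolding pairwise_def disjnt_def by blast
    with X X' Y(2) Y'(2) show "Y = Y'"
      by auto
  qed
  then have "pairwise disjnt (set (lex C A))"
    unfolding pairwise_def disjnt_def by blast
  moreover have "{} \<notin> set (lex C A)"
    unfolding in_set_lex by blast
  ultimately show ?thesis
    unfolding disjoint_class_list_def by blast
qed

lemma emptyrev_snoc: "emptyrev (S @ [A]) = lex (emptyrev S) A"
  by (simp add: emptyrev_def)

lemma disjoint_class_list_emptyrev: "disjoint_class_list (emptyrev S)"
proof (induction S rule: rev_induct)
  case Nil
  then show ?case by (simp add: emptyrev_def flat_def disjoint_class_list_def)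
next
  case (snoc A S)
  then show ?case by (simp add: emptyrev_snoc disjoint_class_list_lex)
qed

lemma same_class_emptyrev: "same_class (emptyrev S) I J \<longleftrightarrow> map (sat I) S = map (sat J) S"
proof (induction S rule: rev_induct)
  case Nil
  then show ?case by (simp add: emptyrev_def flat_def same_class_def)
next
  case (snoc A S)
  then show ?case by (simp add: emptyrev_snoc same_class_lex)
qed

lemma eq_ds_emptyrev: "eq_ds (emptyrev S) I J \<longleftrightarrow> map (sat I) S = map (sat J) S"
  using eq_ds_iff_same_class[OF disjoint_class_list_emptyrev] same_class_emptyrev by blast

lemma sat_boolF [simp]: "sat I (boolF b) = b"
  by (simp add: boolF_def)

lemma sat_conjIff:
  assumes "length Bs = length S"
  shows "sat I (conjIff Bs S) \<longleftrightarrow> Bs = map (sat I) S"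
  using assms by (induction Bs S rule: conjIff.induct) auto

theorem mainTheorem5:
  fixes S :: "('v::finite) form list" and I J :: "'v model"
  shows "eq_ds (emptyrev S) I J \<longleftrightarrow>
    (\<forall>Bs. length Bs = length S \<longrightarrow> eq_ds (emptyrev [conjIff Bs S]) I J)"
proof -
  have conj_agree: "eq_ds (emptyrev [conjIff Bs S]) I J \<longleftrightarrow>
      (Bs = map (sat I) S \<longleftrightarrow> Bs = map (sat J) S)"
    if "length Bs = length S" for Bs
    using that by (simp add: eq_ds_emptyrev sat_conjIff)
  show ?thesis
  proof
    assume "eq_ds (emptyrev S) I J"
    then have "map (sat I) S = map (sat J) S"
      unfolding eq_ds_emptyrev .
    then show "\<forall>Bs. length Bs = length S \<longrightarrow> eq_ds (emptyrev [conjIff Bs S]) I J"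
      using conj_agree by metis
  next
    assume "\<forall>Bs. length Bs = length S \<longrightarrow> eq_ds (emptyrev [conjIff Bs S]) I J"
    then have "map (sat I) S = map (sat J) S"
      using conj_agree[of "map (sat I) S"] by simp
    then show "eq_ds (emptyrev S) I J"
      unfolding eq_ds_emptyrev .
  qed
qed

end
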